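(* Let $f$ be a four times continuously differentiable convex function on $[0,\infty)$ with $f(1)=1$, and let $g(x)=x^2f''(x)$. Suppose $g\ge 0$ on $[0,\infty)$ and $x^2g''(x)-g(\alpha)\,g(x/\alpha)\le 0$ for all $x\ge0$ and all $\alpha>0$. Then for all finite sets $\mathcal{Y},\mathcal{Z}$ and all distributions $q_Y\ll r_Y$ on $\mathcal{Y}$, $q_Z\ll r_Z$ on $\mathcal{Z}$, $$D_f(q_Yq_Z\|r_Yr_Z)\le D_f(q_Y\|r_Y)\,D_f(q_Z\|r_Z).$$ Equivalently, with $\hat f=f-1$, $\log(1+D_{\hat f}(q_Yq_Z\|r_Yr_Z))\le \log(1+D_{\hat f}(q_Y\|r_Y))+\log(1+D_{\hat f}(q_Z\|r_Z))$.
   Context: For distributions $p\ll q$ on a finite set and any function $f$ on $[0,\infty)$, $D_f(p\|q)=\sum_x q(x) f(p(x)/q(x))$ with the convention $0f(0/0)=0$. *)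

theory Defs
  imports "HOL-Analysis.Analysis"
begin

definition is_dist :: "'a set \<Rightarrow> ('a \<Rightarrow> real) \<Rightarrow> bool" where
  "is_dist A p \<longleftrightarrow> (\<forall>x\<in>A. 0 \<le> p x) \<and> sum p A = 1"

definition abs_cont :: "'a set \<Rightarrow> ('a \<Rightarrow> real) \<Rightarrow> ('a \<Rightarrow> real) \<Rightarrow> bool" where
  "abs_cont A p q \<longleftrightarrow> (\<forall>x\<in>A. q x = 0 \<longrightarrow> p x = 0)"

text \<open>f-divergence D_f(p||q) on a finite set A, with the convention 0 f(0/0) = 0.\<close>
definition fdiv :: "(real \<Rightarrow> real) \<Rightarrow> 'a set \<Rightarrow> ('a \<Rightarrow> real) \<Rightarrow> ('a \<Rightarrow> real) \<Rightarrow> real" where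
  "fdiv f A p q = (\<Sum>x\<in>A. if q x = 0 then 0 else q x * f (p x / q x))"

definition prod_dist :: "('a \<Rightarrow> real) \<Rightarrow> ('b \<Rightarrow> real) \<Rightarrow> ('a \<times> 'b \<Rightarrow> real)" where
  "prod_dist p q = (\<lambda>(y, z). p y * q z)"

end

theory Submission
  imports Defs
begin

(* Put \<Phi>(a) = D_f(a q_Z || r_Z) = \<Sum>_z r_Z(z) f(a q_Z(z) / r_Z(z)); then
   D_f(q_Y q_Z || r_Y r_Z) = D_\<Phi>(q_Y || r_Y).  Whenever u'' \<le> c v'' on (0,\<infinity>) and u(1) = c v(1),
   the function c v - u is convex and vanishes at 1, so Jensen's inequality gives D_u \<le> c D_v.
   With u = \<Phi>, v = f and c = D_f(q_Z || r_Z) = \<Phi>(1) it remains to show \<Phi>''(a) \<le> c f''(a), i.e.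
   (multiplying by a^2) D_{g(\<cdot> a)}(q_Z || r_Z) \<le> g(a) D_f(q_Z || r_Z).  This is the same comparison
   once more, with u = g(\<cdot> a), v = f and c = g(a): the hypothesis on g at x = a b, \<alpha> = a says
   exactly a^2 g''(a b) \<le> g(a) f''(b). *)

lemma above_tangent_of_second_deriv_nonneg:
  fixes u u' u'' :: "real \<Rightarrow> real"
  assumes u': "\<And>x. 0 < x \<Longrightarrow> (u has_real_derivative u' x) (at x)"
    and u'': "\<And>x. 0 < x \<Longrightarrow> (u' has_real_derivative u'' x) (at x)"
    and nonneg: "\<And>x. 0 < x \<Longrightarrow> 0 \<le> u'' x"
    and cont: "continuous_on {0..} u"
    and "0 < t" "0 \<le> x"
  shows "u t + u' t * (x - t) \<le> u x"
proof -
  have "u t \<le> u y - u' t * (y - t)" if "0 < y" for y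
    using f''_imp_f'[of "{0<..}" u u' u'' t y] u' u'' nonneg \<open>0 < t\<close> that by simp
  moreover have "continuous_on (closure {0<..}) (\<lambda>y. u y - u' t * (y - t))"
    using cont by (auto intro!: continuous_intros)
  ultimately have "u t \<le> u x - u' t * (x - t)"
    using continuous_ge_on_closure[of "{0<..}" "\<lambda>y. u y - u' t * (y - t)" x "u t"] \<open>0 \<le> x\<close> by simp
  then show ?thesis by simp
qed

lemma value_at_one_le_fdiv:
  fixes h :: "real \<Rightarrow> real"
  assumes q: "is_dist A q" and r: "is_dist A r" and qr: "abs_cont A q r"
    and tangent: "\<And>x. 0 \<le> x \<Longrightarrow> h 1 + d * (x - 1) \<le> h x"
  shows "h 1 \<le> fdiv h A q r"
proof -
  have "h 1 = (\<Sum>x\<in>A. h 1 * r x + d * (q x - r x))"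
    using q r by (simp add: sum.distrib sum_subtractf sum_distrib_left[symmetric] is_dist_def)
  also have "\<dots> \<le> fdiv h A q r"
    unfolding fdiv_def
  proof (rule sum_mono)
    fix x assume "x \<in> A"
    show "h 1 * r x + d * (q x - r x) \<le> (if r x = 0 then 0 else r x * h (q x / r x))"
    proof (cases "r x = 0")
      case True
      with qr \<open>x \<in> A\<close> show ?thesis by (simp add: abs_cont_def)
    next
      case False
      with q r \<open>x \<in> A\<close> have "0 < r x" "0 \<le> q x / r x"
        by (auto simp: is_dist_def order.strict_iff_order)
      then have "r x * (h 1 + d * (q x / r x - 1)) \<le> r x * h (q x / r x)"
        using tangent by simp
      moreover have "r x * (h 1 + d * (q x / r x - 1)) = h 1 * r x + d * (q x - r x)"
        using False by (simp add: field_simps)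
      ultimately show ?thesis using False by simp
    qed
  qed
  finally show ?thesis .
qed

lemma fdiv_le_of_second_deriv_le:
  fixes u u' u'' v v' v'' :: "real \<Rightarrow> real"
  assumes u': "\<And>x. 0 < x \<Longrightarrow> (u has_real_derivative u' x) (at x)"
    and u'': "\<And>x. 0 < x \<Longrightarrow> (u' has_real_derivative u'' x) (at x)"
    and v': "\<And>x. 0 < x \<Longrightarrow> (v has_real_derivative v' x) (at x)"
    and v'': "\<And>x. 0 < x \<Longrightarrow> (v' has_real_derivative v'' x) (at x)"
    and cont: "continuous_on {0..} u" "continuous_on {0..} v"
    and le: "\<And>x. 0 < x \<Longrightarrow> u'' x \<le> c * v'' x"
    and at_one: "u 1 = c * v 1"
    and dist: "is_dist A q" "is_dist A r" "abs_cont A q r"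
  shows "fdiv u A q r \<le> c * fdiv v A q r"
proof -
  define k where "k x = c * v x - u x" for x
  have "k 1 \<le> fdiv k A q r"
  proof (rule value_at_one_le_fdiv[OF dist])
    fix x :: real assume "0 \<le> x"
    show "k 1 + (c * v' 1 - u' 1) * (x - 1) \<le> k x"
      unfolding k_def
      by (rule above_tangent_of_second_deriv_nonneg[of _ "\<lambda>x. c * v' x - u' x"
            "\<lambda>x. c * v'' x - u'' x", OF _ _ _ _ _ \<open>0 \<le> x\<close>])
         (use u' u'' v' v'' le cont in \<open>auto intro!: derivative_eq_intros continuous_intros\<close>)
  qed
  moreover have "fdiv k A q r = c * fdiv v A q r - fdiv u A q r"
    unfolding k_def fdiv_def
    by (simp add: sum_distrib_left sum_subtractf[symmetric] algebra_simps if_distrib cong: if_cong)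
  ultimately show ?thesis using at_one by (simp add: k_def)
qed

lemma has_real_derivative_scaled:
  fixes w w' :: "real \<Rightarrow> real"
  assumes w': "\<And>x. 0 < x \<Longrightarrow> (w has_real_derivative w' x) (at x)"
    and "0 < a" "0 \<le> b"
  shows "((\<lambda>a. w (a * b)) has_real_derivative b * w' (a * b)) (at a)"
proof (cases "b = 0")
  case False
  with assms have "0 < a * b" by simp
  have "((\<lambda>a. a * b) has_real_derivative b) (at a)"
    by (auto intro!: derivative_eq_intros)
  from DERIV_chain2[OF w'[OF \<open>0 < a * b\<close>] this] show ?thesis
    by (simp add: mult.commute)
qed simp

lemma has_real_derivative_fdiv_scaled:
  fixes w w' \<phi> :: "real \<Rightarrow> real"
  assumes w': "\<And>x. 0 < x \<Longrightarrow> (w has_real_derivative w' x) (at x)" and "0 < a"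
    and q: "\<And>z. z \<in> Z \<Longrightarrow> 0 \<le> q z" and r: "\<And>z. z \<in> Z \<Longrightarrow> 0 \<le> r z"
  shows "((\<lambda>a. fdiv (\<lambda>b. \<phi> b * w (a * b)) Z q r) has_real_derivative
           fdiv (\<lambda>b. \<phi> b * b * w' (a * b)) Z q r) (at a)"
  unfolding fdiv_def
proof (rule DERIV_sum)
  fix z assume "z \<in> Z"
  with q r have "0 \<le> q z / r z" by simp
  from has_real_derivative_scaled[OF w' \<open>0 < a\<close> this]
  show "((\<lambda>a. if r z = 0 then 0 else r z * (\<phi> (q z / r z) * w (a * (q z / r z))))
      has_real_derivative (if r z = 0 then 0
        else r z * (\<phi> (q z / r z) * (q z / r z) * w' (a * (q z / r z))))) (at a)"
    by (auto intro!: derivative_eq_intros)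
qed

lemma continuous_on_fdiv_scaled:
  fixes w :: "real \<Rightarrow> real"
  assumes w: "continuous_on {0..} w"
    and q: "\<And>z. z \<in> Z \<Longrightarrow> 0 \<le> q z" and r: "\<And>z. z \<in> Z \<Longrightarrow> 0 \<le> r z"
  shows "continuous_on {0..} (\<lambda>a. fdiv (\<lambda>b. w (a * b)) Z q r)"
  unfolding fdiv_def
proof (intro continuous_on_sum)
  fix z assume "z \<in> Z"
  with q r have img: "(\<lambda>a. a * (q z / r z)) ` {0..} \<subseteq> {0..}" by auto
  have "continuous_on {0..} (\<lambda>a. w (a * (q z / r z)))"
    by (rule continuous_on_compose2[OF w _ img]) (intro continuous_intros)
  then show "continuous_on {0..} (\<lambda>a. if r z = 0 then 0 else r z * w (a * (q z / r z)))"
    by (cases "r z = 0") (simp_all add: continuous_on_mult_left)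
qed

lemma fdiv_prod_dist:
  "fdiv f (Y \<times> Z) (prod_dist qY qZ) (prod_dist rY rZ)
     = fdiv (\<lambda>a. fdiv (\<lambda>b. f (a * b)) Z qZ rZ) Y qY rY"
proof -
  have "fdiv f (Y \<times> Z) (prod_dist qY qZ) (prod_dist rY rZ) = (\<Sum>y\<in>Y. \<Sum>z\<in>Z.
      if rY y * rZ z = 0 then 0 else rY y * rZ z * f (qY y * qZ z / (rY y * rZ z)))"
    unfolding fdiv_def prod_dist_def sum.cartesian_product by (rule sum.cong) auto
  also have "\<dots> = fdiv (\<lambda>a. fdiv (\<lambda>b. f (a * b)) Z qZ rZ) Y qY rY"
    unfolding fdiv_def by (auto simp: sum_distrib_left intro!: sum.cong)
  finally show ?thesis .
qed

lemma fdiv_prod_dist_le_of_second_deriv_le: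
  fixes f f' f'' :: "real \<Rightarrow> real"
  assumes f': "\<And>x. 0 < x \<Longrightarrow> (f has_real_derivative f' x) (at x)"
    and f'': "\<And>x. 0 < x \<Longrightarrow> (f' has_real_derivative f'' x) (at x)"
    and cont: "continuous_on {0..} f" and "f 1 = 1"
    and Y: "is_dist Y qY" "is_dist Y rY" "abs_cont Y qY rY"
    and qZ: "\<And>z. z \<in> Z \<Longrightarrow> 0 \<le> qZ z" and rZ: "\<And>z. z \<in> Z \<Longrightarrow> 0 \<le> rZ z"
    and le: "\<And>a. 0 < a \<Longrightarrow> fdiv (\<lambda>b. b * b * f'' (a * b)) Z qZ rZ \<le> fdiv f Z qZ rZ * f'' a"
  shows "fdiv f (Y \<times> Z) (prod_dist qY qZ) (prod_dist rY rZ) \<le> fdiv f Y qY rY * fdiv f Z qZ rZ"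
proof -
  have "fdiv (\<lambda>a. fdiv (\<lambda>b. f (a * b)) Z qZ rZ) Y qY rY \<le> fdiv f Z qZ rZ * fdiv f Y qY rY"
  proof (rule fdiv_le_of_second_deriv_le[OF _ _ f' f'' _ cont _ _ Y])
    fix a :: real assume "0 < a"
    show "((\<lambda>a. fdiv (\<lambda>b. f (a * b)) Z qZ rZ) has_real_derivative
        fdiv (\<lambda>b. b * f' (a * b)) Z qZ rZ) (at a)"
      using has_real_derivative_fdiv_scaled[OF f' \<open>0 < a\<close> qZ rZ, where \<phi> = "\<lambda>_. 1"] by simp
    show "((\<lambda>a. fdiv (\<lambda>b. b * f' (a * b)) Z qZ rZ) has_real_derivative
        fdiv (\<lambda>b. b * b * f'' (a * b)) Z qZ rZ) (at a)"
      using has_real_derivative_fdiv_scaled[OF f'' \<open>0 < a\<close> qZ rZ, where \<phi> = "\<lambda>b. b"] .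
    show "fdiv (\<lambda>b. b * b * f'' (a * b)) Z qZ rZ \<le> fdiv f Z qZ rZ * f'' a"
      using le \<open>0 < a\<close> .
  qed (use continuous_on_fdiv_scaled[OF cont qZ rZ] \<open>f 1 = 1\<close> in simp_all)
  then show ?thesis by (simp add: fdiv_prod_dist mult.commute)
qed

lemma fdiv_scaled_second_deriv_le:
  fixes f f' f'' g g' g'' :: "real \<Rightarrow> real"
  assumes f': "\<And>x. 0 < x \<Longrightarrow> (f has_real_derivative f' x) (at x)"
    and f'': "\<And>x. 0 < x \<Longrightarrow> (f' has_real_derivative f'' x) (at x)"
    and g': "\<And>x. 0 < x \<Longrightarrow> (g has_real_derivative g' x) (at x)"
    and g'': "\<And>x. 0 < x \<Longrightarrow> (g' has_real_derivative g'' x) (at x)"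
    and cont: "continuous_on {0..} f" "continuous_on {0..} g"
    and g_eq: "\<And>x. g x = x\<^sup>2 * f'' x"
    and g_cond: "\<And>x \<alpha>. 0 < x \<Longrightarrow> 0 < \<alpha> \<Longrightarrow> x\<^sup>2 * g'' x \<le> g \<alpha> * g (x / \<alpha>)"
    and "f 1 = 1"
    and dist: "is_dist Z q" "is_dist Z r" "abs_cont Z q r"
    and "0 < a"
  shows "fdiv (\<lambda>b. b * b * f'' (a * b)) Z q r \<le> fdiv f Z q r * f'' a"
proof -
  have "fdiv (\<lambda>b. g (b * a)) Z q r \<le> g a * fdiv f Z q r"
  proof (rule fdiv_le_of_second_deriv_le[OF _ _ f' f'' _ cont(1) _ _ dist])
    fix b :: real assume "0 < b"
    show "((\<lambda>b. g (b * a)) has_real_derivative a * g' (b * a)) (at b)"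
      using has_real_derivative_scaled[OF g' \<open>0 < b\<close>] \<open>0 < a\<close> by simp
    show "((\<lambda>b. a * g' (b * a)) has_real_derivative a * (a * g'' (b * a))) (at b)"
      using has_real_derivative_scaled[OF g'' \<open>0 < b\<close>] \<open>0 < a\<close> by (intro DERIV_cmult) simp
    have "(b * a)\<^sup>2 * g'' (b * a) \<le> g a * g b"
      using g_cond[of "b * a" a] \<open>0 < a\<close> \<open>0 < b\<close> by simp
    then have "b\<^sup>2 * (a * (a * g'' (b * a))) \<le> b\<^sup>2 * (g a * f'' b)"
      by (simp add: g_eq[of b] power2_eq_square algebra_simps)
    then show "a * (a * g'' (b * a)) \<le> g a * f'' b"
      using \<open>0 < b\<close> by simp
  next
    show "continuous_on {0..} (\<lambda>b. g (b * a))"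
      by (rule continuous_on_compose2[OF cont(2)]) (use \<open>0 < a\<close> in \<open>auto intro!: continuous_intros\<close>)
  qed (simp_all add: \<open>f 1 = 1\<close>)
  also have "fdiv (\<lambda>b. g (b * a)) Z q r = a\<^sup>2 * fdiv (\<lambda>b. b * b * f'' (a * b)) Z q r"
    unfolding fdiv_def sum_distrib_left
    by (rule sum.cong) (auto simp: g_eq power2_eq_square algebra_simps)
  finally show ?thesis
    using \<open>0 < a\<close> by (simp add: g_eq power2_eq_square algebra_simps)
qed

theorem theorem3:
  fixes f f1 f2 f3 f4 g g1 g2 :: "real \<Rightarrow> real"
    and Y :: "'a set" and Z :: "'b set"
    and qY rY :: "'a \<Rightarrow> real" and qZ rZ :: "'b \<Rightarrow> real"
  assumes d1: "\<And>x. 0 \<le> x \<Longrightarrow> (f has_real_derivative f1 x) (at x within {0..})"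
    and d2: "\<And>x. 0 \<le> x \<Longrightarrow> (f1 has_real_derivative f2 x) (at x within {0..})"
    and d3: "\<And>x. 0 \<le> x \<Longrightarrow> (f2 has_real_derivative f3 x) (at x within {0..})"
    and d4: "\<And>x. 0 \<le> x \<Longrightarrow> (f3 has_real_derivative f4 x) (at x within {0..})"
    and c4: "continuous_on {0..} f4"
    and cvx: "convex_on {0..} f"
    and f_one: "f 1 = 1"
    and g_def: "\<And>x. g x = x\<^sup>2 * f2 x"
    and g'1: "\<And>x. 0 \<le> x \<Longrightarrow> (g has_real_derivative g1 x) (at x within {0..})"
    and g'2: "\<And>x. 0 \<le> x \<Longrightarrow> (g1 has_real_derivative g2 x) (at x within {0..})"
    and g_nonneg: "\<And>x. 0 \<le> x \<Longrightarrow> 0 \<le> g x"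
    and g_cond: "\<And>x \<alpha>. 0 \<le> x \<Longrightarrow> 0 < \<alpha> \<Longrightarrow> x\<^sup>2 * g2 x - g \<alpha> * g (x / \<alpha>) \<le> 0"
    and fin: "finite Y" "finite Z"
    and dists: "is_dist Y qY" "is_dist Y rY" "is_dist Z qZ" "is_dist Z rZ"
    and ac: "abs_cont Y qY rY" "abs_cont Z qZ rZ"
  shows "fdiv f (Y \<times> Z) (prod_dist qY qZ) (prod_dist rY rZ)
           \<le> fdiv f Y qY rY * fdiv f Z qZ rZ"
proof -
  \<comment> \<open>Only two derivatives of f and g are used.\<close>
  have at: "at x within {0..} = at x" if "0 < x" for x :: real
    using that by (intro at_within_interior) simp
  have f': "(f has_real_derivative f1 x) (at x)"
    and f'': "(f1 has_real_derivative f2 x) (at x)"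
    and g': "(g has_real_derivative g1 x) (at x)"
    and g'': "(g1 has_real_derivative g2 x) (at x)" if "0 < x" for x
    using d1[of x] d2[of x] g'1[of x] g'2[of x] that unfolding at[OF that] by simp_all
  have cont: "continuous_on {0..} f" "continuous_on {0..} g"
    by (rule DERIV_continuous_on[OF d1], simp, rule DERIV_continuous_on[OF g'1], simp)
  have nonneg: "\<And>z. z \<in> Z \<Longrightarrow> 0 \<le> qZ z" "\<And>z. z \<in> Z \<Longrightarrow> 0 \<le> rZ z"
    using dists(3,4) by (simp_all add: is_dist_def)
  show ?thesis
  proof (rule fdiv_prod_dist_le_of_second_deriv_le[OF f' f'' cont(1) f_one dists(1,2) ac(1) nonneg])
    fix a :: real assume "0 < a"
    show "fdiv (\<lambda>b. b * b * f2 (a * b)) Z qZ rZ \<le> fdiv f Z qZ rZ * f2 a"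
    proof (rule fdiv_scaled_second_deriv_le[OF f' f'' g' g'' cont g_def _ f_one dists(3,4) ac(2) \<open>0 < a\<close>])
      fix x \<alpha> :: real assume "0 < x" "0 < \<alpha>"
      then show "x\<^sup>2 * g2 x \<le> g \<alpha> * g (x / \<alpha>)"
        using g_cond[of x \<alpha>] by simp
    qed
  qed
qed

end
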